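(* Let $N=[n]$ and let $v:2^N\to\mathbb{R}_+$ be any monotone valuation with $v(\emptyset)=0$. Let $X$ be a maximal decision map for $v$ and let $p$ be a pure Nash equilibrium of the pricing game defined by $v$ and $X$. Then for any (not necessarily maximal) decision map $X'$ for $v$ and every $\epsilon>0$ there exists $p^\epsilon\in\mathbb{R}^n_+$ which is an $\epsilon$-Nash equilibrium of the pricing game defined by $v$ and $X'$, such that $v(X'(p^\epsilon))=v(X(p))$, and $p^\epsilon\to p$ as $\epsilon\to 0$.
   Context: Pricing game: $N=[n]$ is a set of services, service $i$ controlled by seller $i$. A buyer has valuation $v:2^N\to\mathbb{R}_+$, monotone with $v(\emptyset)=0$. For $p\in\mathbb{R}^n_+$, $p(S)=\sum_{j\in S}p_j$ and $D(v;p)=\arg\max_{S\subseteq N}(v(S)-p(S))$. A decision map is $X:\mathbb{R}^n_+\to 2^N$ with $X(p)\in D(v;p)$ for all $p$; it is maximal if for every $p$ there is no $S'\in D(v;p)$ with $X(p)\subsetneq S'$. Given a decision map $Y$, seller $i$'s utility is $u_i^Y(p)=p_i\cdot\mathbf{1}\{i\in Y(p)\}$. A pure Nash equilibrium of the game defined by $Y$ is a $p$ with $u^Y_i(p)\ge u^Y_i(p_i',p_{-i})$ for all $i$ and $p_i'\in\mathbb{R}_+$; an $\epsilon$-Nash equilibrium is a $p$ with $u^Y_i(p)\ge u^Y_i(p_i',p_{-i})-\epsilon$ for all $i$ and $p_i'\in\mathbb{R}_+$. The welfare of the game defined by $Y$ at $p$ is $v(Y(p))$. *)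

theory Defs
  imports Complex_Main
begin

text \<open>Services are the elements of a finite type 'n (so N = UNIV, n = CARD('n)).
Price vectors are functions 'n => real; R^n_+ is the set of nonnegative ones.\<close>

definition nonneg_prices :: "('n \<Rightarrow> real) \<Rightarrow> bool" where
  "nonneg_prices p \<longleftrightarrow> (\<forall>i. 0 \<le> p i)"

definition valuation :: "('n::finite set \<Rightarrow> real) \<Rightarrow> bool" where
  "valuation v \<longleftrightarrow> v {} = 0 \<and> (\<forall>S. 0 \<le> v S) \<and> (\<forall>S T. S \<subseteq> T \<longrightarrow> v S \<le> v T)"

definition price_of :: "('n \<Rightarrow> real) \<Rightarrow> 'n set \<Rightarrow> real" where
  "price_of p S = (\<Sum>j\<in>S. p j)"

definition demand :: "('n::finite set \<Rightarrow> real) \<Rightarrow> ('n \<Rightarrow> real) \<Rightarrow> 'n set set" where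
  "demand v p = {S. \<forall>T. v T - price_of p T \<le> v S - price_of p S}"

definition decision_map :: "('n::finite set \<Rightarrow> real) \<Rightarrow> (('n \<Rightarrow> real) \<Rightarrow> 'n set) \<Rightarrow> bool" where
  "decision_map v X \<longleftrightarrow> (\<forall>p. nonneg_prices p \<longrightarrow> X p \<in> demand v p)"

definition maximal_decision_map :: "('n::finite set \<Rightarrow> real) \<Rightarrow> (('n \<Rightarrow> real) \<Rightarrow> 'n set) \<Rightarrow> bool" where
  "maximal_decision_map v X \<longleftrightarrow> decision_map v X \<and>
     (\<forall>p. nonneg_prices p \<longrightarrow> \<not> (\<exists>S'\<in>demand v p. X p \<subset> S'))"

definition seller_utility :: "(('n \<Rightarrow> real) \<Rightarrow> 'n set) \<Rightarrow> 'n \<Rightarrow> ('n \<Rightarrow> real) \<Rightarrow> real" where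
  "seller_utility Y i p = p i * (if i \<in> Y p then 1 else 0)"

definition eps_nash :: "(('n \<Rightarrow> real) \<Rightarrow> 'n set) \<Rightarrow> real \<Rightarrow> ('n \<Rightarrow> real) \<Rightarrow> bool" where
  "eps_nash Y \<epsilon> p \<longleftrightarrow> nonneg_prices p \<and>
     (\<forall>i q. 0 \<le> q \<longrightarrow> seller_utility Y i (p(i := q)) - \<epsilon> \<le> seller_utility Y i p)"

definition pure_nash :: "(('n \<Rightarrow> real) \<Rightarrow> 'n set) \<Rightarrow> ('n \<Rightarrow> real) \<Rightarrow> bool" where
  "pure_nash Y p \<longleftrightarrow> nonneg_prices p \<and>
     (\<forall>i q. 0 \<le> q \<longrightarrow> seller_utility Y i (p(i := q)) \<le> seller_utility Y i p)"

end

theory Submission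
  imports Defs
begin

text \<open>Let \<open>S = X p\<close>. Discounting every price in \<open>S\<close> by the same small fraction \<open>t\<close> makes \<open>S\<close>
strictly more attractive than any bundle that misses part of the price mass of \<open>S\<close>; so every bundle
demanded at the discounted prices is still demanded at \<open>p\<close> and pays the whole price of \<open>S\<close>.
Because \<open>p\<close> is a Nash equilibrium, no seller outside \<open>S\<close> that can be part of a demanded bundle
charges a positive price, hence every such bundle has value \<open>v S\<close>. The same equilibrium property
bounds what a seller can charge after a unilateral deviation by her equilibrium income plus the
discount \<open>t p(S)\<close>, so the discounted prices are a \<open>2 t p(S)\<close>-Nash equilibrium for any decision
map, and they tend to \<open>p\<close> as \<open>t \<rightarrow> 0\<close>.\<close>

lemma price_of_upd_notin:
  assumes "i \<notin> W" shows "price_of (p(i := q)) W = price_of p W"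
  unfolding price_of_def using assms by (intro sum.cong) auto

lemma price_of_upd_in:
  fixes p :: "'n::finite \<Rightarrow> real"
  assumes "i \<in> W" shows "price_of (p(i := q)) W = price_of p W - p i + q"
proof -
  have "price_of (p(i := q)) W = q + price_of p (W - {i})"
    using assms price_of_upd_notin[of i "W - {i}" p q]
    unfolding price_of_def by (simp add: sum.remove)
  moreover have "price_of p W = p i + price_of p (W - {i})"
    unfolding price_of_def using assms by (simp add: sum.remove)
  ultimately show ?thesis by linarith
qed

lemma price_of_nonneg:
  fixes p :: "'n::finite \<Rightarrow> real"
  assumes "nonneg_prices p" shows "0 \<le> price_of p W"
  using assms unfolding price_of_def nonneg_prices_def by (simp add: sum_nonneg)

lemma price_of_mono:
  fixes p :: "'n::finite \<Rightarrow> real"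
  assumes "nonneg_prices p" "A \<subseteq> B" shows "price_of p A \<le> price_of p B"
  using assms unfolding price_of_def nonneg_prices_def by (intro sum_mono2) auto

lemma price_of_Int_Diff:
  fixes p :: "'n::finite \<Rightarrow> real"
  shows "price_of p T = price_of p (T \<inter> S) + price_of p (T - S)"
  unfolding price_of_def by (rule sum.Int_Diff) simp

lemma demandD: "S \<in> demand v p \<Longrightarrow> v T - price_of p T \<le> v S - price_of p S"
  unfolding demand_def by blast

lemma decision_map_demand:
  "decision_map v X \<Longrightarrow> nonneg_prices p \<Longrightarrow> X p \<in> demand v p"
  unfolding decision_map_def by blast

lemma nonneg_prices_upd: "nonneg_prices p \<Longrightarrow> 0 \<le> q \<Longrightarrow> nonneg_prices (p(i := q))"
  unfolding nonneg_prices_def by simp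

lemma seller_utility_nonneg: "nonneg_prices p \<Longrightarrow> 0 \<le> seller_utility Y i p"
  unfolding seller_utility_def nonneg_prices_def by simp

definition discount :: "'n set \<Rightarrow> real \<Rightarrow> ('n \<Rightarrow> real) \<Rightarrow> 'n \<Rightarrow> real" where
  "discount S t p j = (if j \<in> S then (1 - t) * p j else p j)"

lemma price_of_discount:
  fixes p :: "'n::finite \<Rightarrow> real"
  shows "price_of (discount S t p) W = price_of p W - t * price_of p (W \<inter> S)"
proof -
  have "price_of (discount S t p) W = (\<Sum>j\<in>W. p j - (if j \<in> S then t * p j else 0))"
    unfolding price_of_def discount_def by (intro sum.cong) (auto simp: algebra_simps)
  also have "\<dots> = price_of p W - (\<Sum>j\<in>W \<inter> S. t * p j)"
    unfolding price_of_def by (simp add: sum_subtractf sum.inter_restrict)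
  finally show ?thesis
    unfolding price_of_def by (simp add: sum_distrib_left)
qed

lemma nonneg_prices_discount:
  "nonneg_prices p \<Longrightarrow> t \<le> 1 \<Longrightarrow> nonneg_prices (discount S t p)"
  unfolding nonneg_prices_def discount_def by simp

lemma discount_le:
  "nonneg_prices p \<Longrightarrow> 0 \<le> t \<Longrightarrow> discount S t p i \<le> p i"
  unfolding nonneg_prices_def discount_def by (simp add: algebra_simps)

lemma tendsto_discount:
  assumes "(t \<longlongrightarrow> 0) F"
  shows "((\<lambda>x. discount S (t x) p i) \<longlongrightarrow> p i) F"
proof (cases "i \<in> S")
  case True
  have "((\<lambda>x. (1 - t x) * p i) \<longlongrightarrow> (1 - 0) * p i) F"
    by (intro tendsto_intros assms)
  with True show ?thesis unfolding discount_def by simp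
qed (simp add: discount_def)

text \<open>Every bundle missing part of the price mass of \<open>S\<close> loses the strictly positive fraction
\<open>t\<close> of that mass against \<open>S\<close>.\<close>

lemma demand_discount:
  fixes p :: "'n::finite \<Rightarrow> real"
  assumes p: "nonneg_prices p" and S: "S \<in> demand v p" and "0 < t"
    and T: "T \<in> demand v (discount S t p)"
  shows "T \<in> demand v p" and "price_of p (T \<inter> S) = price_of p S"
proof -
  have "v S - price_of p S + t * price_of p S \<le> v T - price_of p T + t * price_of p (T \<inter> S)"
    using demandD[OF T, of S] by (simp add: price_of_discount)
  moreover have TS_le_S: "v T - price_of p T \<le> v S - price_of p S"
    using demandD[OF S] .
  ultimately have "t * price_of p S \<le> t * price_of p (T \<inter> S)"
    by linarith
  moreover have "price_of p (T \<inter> S) \<le> price_of p S"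
    using price_of_mono[OF p] by blast
  ultimately show TS: "price_of p (T \<inter> S) = price_of p S"
    using \<open>0 < t\<close> by (simp add: mult_le_cancel_left)
  have "v S - price_of p S \<le> v T - price_of p T"
    using demandD[OF T, of S] TS by (simp add: price_of_discount)
  with demandD[OF S] show "T \<in> demand v p"
    unfolding demand_def by (blast intro: order_trans)
qed

lemma mem_of_price_of_Int_eq:
  fixes p :: "'n::finite \<Rightarrow> real"
  assumes p: "nonneg_prices p" and TS: "price_of p (T \<inter> S) = price_of p S"
    and "j \<in> S" "0 < p j"
  shows "j \<in> T"
proof (rule ccontr)
  assume "j \<notin> T"
  have "p j \<le> price_of p (S - T)"
    using p \<open>j \<in> S\<close> \<open>j \<notin> T\<close> unfolding price_of_def nonneg_prices_def
    by (intro member_le_sum) auto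
  moreover have "price_of p S = price_of p (T \<inter> S) + price_of p (S - T)"
    using price_of_Int_Diff[of p S T] by (simp add: Int_commute)
  ultimately show False using TS \<open>0 < p j\<close> by simp
qed

context
  fixes v :: "'n::finite set \<Rightarrow> real" and X :: "('n \<Rightarrow> real) \<Rightarrow> 'n set" and p :: "'n \<Rightarrow> real"
  assumes X: "decision_map v X" and nash: "pure_nash X p"
begin

lemma nonneg_prices_nash: "nonneg_prices p"
  using nash unfolding pure_nash_def by blast

text \<open>If seller \<open>i\<close> could raise her price to \<open>c\<close> while a bundle \<open>T \<ni> i\<close> stays preferred to every
bundle avoiding \<open>i\<close>, any price strictly between her income and \<open>c\<close> would be a profitable deviation.\<close>

lemma nash_raise_bound:
  assumes "i \<in> T"
    and T: "\<And>W. i \<notin> W \<Longrightarrow> v W - price_of p W \<le> v T - price_of p T + p i - c"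
  shows "c \<le> seller_utility X i p"
proof (rule ccontr)
  assume "\<not> c \<le> seller_utility X i p"
  define u where "u = seller_utility X i p"
  define q where "q = (u + c) / 2"
  have u_nonneg: "0 \<le> u"
    unfolding u_def by (rule seller_utility_nonneg[OF nonneg_prices_nash])
  have q: "u < q" "q < c" "0 \<le> q"
    using \<open>\<not> c \<le> seller_utility X i p\<close> u_nonneg unfolding q_def u_def by auto
  define Y where "Y = X (p(i := q))"
  have Y: "Y \<in> demand v (p(i := q))"
    unfolding Y_def
    using decision_map_demand[OF X nonneg_prices_upd[OF nonneg_prices_nash \<open>0 \<le> q\<close>]] .
  have "i \<in> Y"
  proof (rule ccontr)
    assume "i \<notin> Y"
    have "v T - price_of p T + p i - q \<le> v Y - price_of p Y"
      using demandD[OF Y, of T] price_of_upd_in[OF \<open>i \<in> T\<close>, of p q]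
        price_of_upd_notin[OF \<open>i \<notin> Y\<close>, of p q] by simp
    with T[OF \<open>i \<notin> Y\<close>] \<open>q < c\<close> show False by linarith
  qed
  then have "seller_utility X i (p(i := q)) = q"
    unfolding seller_utility_def Y_def by simp
  moreover have "seller_utility X i (p(i := q)) \<le> u"
    using nash \<open>0 \<le> q\<close> unfolding pure_nash_def u_def by blast
  ultimately show False using \<open>u < q\<close> by linarith
qed

lemma nash_demand_outside_zero:
  assumes T: "T \<in> demand v p" and "j \<in> T" "j \<notin> X p"
  shows "p j = 0"
proof -
  have "p j \<le> seller_utility X j p"
    using demandD[OF T] by (intro nash_raise_bound[OF \<open>j \<in> T\<close>]) simp
  with \<open>j \<notin> X p\<close> nonneg_prices_nash show ?thesis
    unfolding seller_utility_def nonneg_prices_def by (simp add: order_antisym)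
qed

lemma nash_demand_value:
  assumes T: "T \<in> demand v p" and TS: "price_of p (T \<inter> X p) = price_of p (X p)"
  shows "v T = v (X p)"
proof -
  have S: "X p \<in> demand v p"
    by (rule decision_map_demand[OF X nonneg_prices_nash])
  have "price_of p (T - X p) = 0"
    unfolding price_of_def using nash_demand_outside_zero[OF T] by simp
  then have "price_of p T = price_of p (X p)"
    using price_of_Int_Diff[of p T "X p"] TS by simp
  with demandD[OF T, of "X p"] demandD[OF S, of T] show ?thesis by simp
qed

context
  fixes X' :: "('n \<Rightarrow> real) \<Rightarrow> 'n set" and t :: real
  assumes X': "decision_map v X'" and t: "0 < t" "t < 1"
begin

lemma discount_demand_value: "v (X' (discount (X p) t p)) = v (X p)"
proof -
  have T: "X' (discount (X p) t p) \<in> demand v (discount (X p) t p)"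
    using decision_map_demand[OF X' nonneg_prices_discount[OF nonneg_prices_nash]] t by simp
  show ?thesis
    using demand_discount[OF nonneg_prices_nash decision_map_demand[OF X nonneg_prices_nash] \<open>0 < t\<close> T]
    by (rule nash_demand_value)
qed

lemma discount_deviation_bound:
  assumes "0 \<le> q" and i: "i \<in> X' ((discount (X p) t p)(i := q))"
  shows "q \<le> seller_utility X i p + t * price_of p (X p)"
proof -
  let ?r = "discount (X p) t p"
  let ?T = "X' (?r(i := q))"
  have T: "?T \<in> demand v (?r(i := q))"
    using decision_map_demand[OF X' nonneg_prices_upd[OF nonneg_prices_discount]]
      nonneg_prices_nash \<open>0 \<le> q\<close> t by simp
  have "q - t * price_of p (X p) \<le> seller_utility X i p"
  proof (rule nash_raise_bound[OF i])
    fix W assume "i \<notin> W"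
    have "v W - price_of ?r W \<le> v ?T - price_of ?r ?T + ?r i - q"
      using demandD[OF T, of W] price_of_upd_notin[OF \<open>i \<notin> W\<close>, of ?r q]
        price_of_upd_in[OF i, of ?r q] by simp
    moreover have "0 \<le> t * price_of p (W \<inter> X p)"
      using t price_of_nonneg[OF nonneg_prices_nash] by simp
    moreover have "t * price_of p (?T \<inter> X p) \<le> t * price_of p (X p)"
      using t price_of_mono[OF nonneg_prices_nash, of "?T \<inter> X p" "X p"] by simp
    moreover have "?r i \<le> p i"
      using discount_le[OF nonneg_prices_nash] t by simp
    ultimately show "v W - price_of p W
        \<le> v ?T - price_of p ?T + p i - (q - t * price_of p (X p))"
      by (simp add: price_of_discount)
  qed
  then show ?thesis by simp
qed

text \<open>A deviating seller gains at most \<open>t p(S)\<close> on top of her equilibrium income, and she loses at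
most another \<open>t p(S)\<close> of that income through the discount.\<close>

lemma eps_nash_discount:
  assumes "2 * t * price_of p (X p) \<le> \<epsilon>"
  shows "eps_nash X' \<epsilon> (discount (X p) t p)"
proof -
  let ?r = "discount (X p) t p"
  let ?P = "price_of p (X p)"
  have r: "nonneg_prices ?r"
    using nonneg_prices_discount[OF nonneg_prices_nash] t by simp
  have P: "0 \<le> ?P" by (rule price_of_nonneg[OF nonneg_prices_nash])
  have eps: "2 * (t * ?P) \<le> \<epsilon>"
    using assms by (simp add: mult.assoc)
  have tP: "0 \<le> t * ?P"
    using P t by simp
  with eps have "0 \<le> \<epsilon>" by linarith
  have "seller_utility X' i (?r(i := q)) - \<epsilon> \<le> seller_utility X' i ?r" if "0 \<le> q" for i q
  proof (cases "i \<in> X' (?r(i := q))")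
    case False
    then have "seller_utility X' i (?r(i := q)) = 0"
      unfolding seller_utility_def by simp
    then show ?thesis
      using seller_utility_nonneg[OF r, of X' i] \<open>0 \<le> \<epsilon>\<close> by simp
  next
    case True
    have q: "q \<le> seller_utility X i p + t * ?P"
      by (rule discount_deviation_bound[OF \<open>0 \<le> q\<close> True])
    have lhs: "seller_utility X' i (?r(i := q)) = q"
      using True unfolding seller_utility_def by simp
    show ?thesis
    proof (cases "i \<in> X p \<and> 0 < p i")
      case True
      have T: "X' ?r \<in> demand v ?r"
        by (rule decision_map_demand[OF X' r])
      have "price_of p (X' ?r \<inter> X p) = ?P"
        by (rule demand_discount(2)[OF nonneg_prices_nash
              decision_map_demand[OF X nonneg_prices_nash] \<open>0 < t\<close> T])
      with True have "i \<in> X' ?r"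
        using mem_of_price_of_Int_eq[OF nonneg_prices_nash] by blast
      then have "seller_utility X' i ?r = ?r i"
        unfolding seller_utility_def by simp
      also have "\<dots> = p i - t * p i"
        using True unfolding discount_def by (simp add: left_diff_distrib)
      finally have "seller_utility X' i ?r = p i - t * p i" .
      moreover have "seller_utility X i p = p i"
        using True unfolding seller_utility_def by simp
      moreover have "p i \<le> ?P"
        using nonneg_prices_nash True unfolding price_of_def nonneg_prices_def
        by (intro member_le_sum) auto
      then have "t * p i \<le> t * ?P"
        using t by simp
      moreover note this
      ultimately show ?thesis
        using lhs q eps by linarith
    next
      case False
      moreover have "0 \<le> p i"
        using nonneg_prices_nash unfolding nonneg_prices_def by blast
      ultimately have "p i = 0 \<or> i \<notin> X p"
        by linarith
      then have "seller_utility X i p = 0"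
        unfolding seller_utility_def by auto
      then show ?thesis
        using lhs q eps tP seller_utility_nonneg[OF r, of X' i] by linarith
    qed
  qed
  with r show ?thesis unfolding eps_nash_def by blast
qed

end

end

theorem mainTheorem3:
  fixes v :: "'n::finite set \<Rightarrow> real"
    and X X' :: "('n \<Rightarrow> real) \<Rightarrow> 'n set"
    and p :: "'n \<Rightarrow> real"
  assumes "valuation v"
    and "maximal_decision_map v X"
    and "pure_nash X p"
    and "decision_map v X'"
  shows "\<exists>pe :: real \<Rightarrow> 'n \<Rightarrow> real.
           (\<forall>\<epsilon>>0. eps_nash X' \<epsilon> (pe \<epsilon>) \<and> v (X' (pe \<epsilon>)) = v (X p))
         \<and> (\<forall>i. ((\<lambda>\<epsilon>. pe \<epsilon> i) \<longlongrightarrow> p i) (at_right 0))"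
proof -
  have X: "decision_map v X"
    using assms(2) unfolding maximal_decision_map_def by blast
  define c where "c = 2 * price_of p (X p) + 1"
  have "0 < c"
    using price_of_nonneg[OF nonneg_prices_nash[OF X assms(3)], of "X p"] unfolding c_def by simp
  define t where "t \<epsilon> = \<epsilon> / (\<epsilon> + c)" for \<epsilon> :: real
  have "eps_nash X' \<epsilon> (discount (X p) (t \<epsilon>) p)
      \<and> v (X' (discount (X p) (t \<epsilon>) p)) = v (X p)" if "0 < \<epsilon>" for \<epsilon>
  proof -
    have t: "0 < t \<epsilon>" "t \<epsilon> < 1" "t \<epsilon> * c < \<epsilon>"
      using that \<open>0 < c\<close> unfolding t_def by (simp_all add: field_simps)
    then have "2 * t \<epsilon> * price_of p (X p) \<le> \<epsilon>"
      unfolding c_def by (simp add: algebra_simps)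
    with t show ?thesis
      using eps_nash_discount[OF X assms(3,4)] discount_demand_value[OF X assms(3,4)] by blast
  qed
  moreover have "(t \<longlongrightarrow> 0 / (0 + c)) (at_right 0)"
    unfolding t_def using \<open>0 < c\<close> by (intro tendsto_intros) auto
  then have "((\<lambda>\<epsilon>. discount (X p) (t \<epsilon>) p i) \<longlongrightarrow> p i) (at_right 0)" for i
    by (intro tendsto_discount) simp
  ultimately show ?thesis
    by (intro exI[of _ "\<lambda>\<epsilon>. discount (X p) (t \<epsilon>) p"]) simp
qed

end
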